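(* For $R=\mathbb{Z}_9$ and for $R=\mathbb{S}_3=\mathbb{F}_3[X]/(X^2)$ there exists a $(57,5)$-blocking set in $\mathrm{PHG}(2,R)$, i.e. a set of $57$ points meeting every line in at least $5$ points. Equivalently (taking the complement), there exists a projective $(60,7)$-arc in $\mathrm{PHG}(2,R)$.
   Context: For a finite chain ring $R$ of length $2$ with residue field $\mathbb{F}_q$ (here $q=3$, $|R|=9$), the projective Hjelmslev plane $\mathrm{PHG}(2,R)$ is the incidence structure whose points are the free rank-$1$ submodules of the right module $R_R^3$, whose lines are the free rank-$2$ submodules of $R_R^3$, with incidence given by inclusion; it has $q^4+q^3+q^2$ points ($117$ here) and each line contains $q^2+q$ points ($12$ here). A projective $(k,n)$-arc is a set of $k$ points meeting every line in at most $n$ points. *)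

theory Defs
  imports Main "HOL-Library.Numeral_Type"
begin

section \<open>The ring S_q = F_q[X]/(X^2): dual numbers a + bX over a commutative ring\<close>

datatype 'a dual = Dual (re: 'a) (ep: 'a)

instantiation dual :: (comm_ring_1) comm_ring_1
begin
definition "zero_dual = Dual 0 0"
definition "one_dual = Dual 1 0"
definition "plus_dual x y = Dual (re x + re y) (ep x + ep y)"
definition "minus_dual x y = Dual (re x - re y) (ep x - ep y)"
definition "uminus_dual x = Dual (- re x) (- ep x)"
definition "times_dual x y = Dual (re x * re y) (re x * ep y + ep x * re y)"
instance
  by standard
     (auto simp: zero_dual_def one_dual_def plus_dual_def minus_dual_def
                 uminus_dual_def times_dual_def algebra_simps intro: dual.expand)
end

type_synonym Z9 = "9"
type_synonym S3 = "3 dual"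

type_synonym 'a vec3 = "'a \<times> 'a \<times> 'a"

definition vzero :: "'a::comm_ring_1 vec3" where
  "vzero = (0, 0, 0)"

definition vadd :: "'a::comm_ring_1 vec3 \<Rightarrow> 'a vec3 \<Rightarrow> 'a vec3" where
  "vadd u v = (case u of (x1, y1, z1) \<Rightarrow> case v of (x2, y2, z2) \<Rightarrow> (x1 + x2, y1 + y2, z1 + z2))"

definition vsmul :: "'a::comm_ring_1 vec3 \<Rightarrow> 'a \<Rightarrow> 'a vec3" where
  "vsmul v r = (case v of (x, y, z) \<Rightarrow> (x * r, y * r, z * r))"

definition span1 :: "'a::comm_ring_1 vec3 \<Rightarrow> 'a vec3 set" where
  "span1 v = {vsmul v r | r. True}"

definition span2 :: "'a::comm_ring_1 vec3 \<Rightarrow> 'a vec3 \<Rightarrow> 'a vec3 set" where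
  "span2 u w = {vadd (vsmul u r) (vsmul w s) | r s. True}"

definition indep1 :: "'a::comm_ring_1 vec3 \<Rightarrow> bool" where
  "indep1 v \<longleftrightarrow> (\<forall>r. vsmul v r = vzero \<longrightarrow> r = 0)"

definition indep2 :: "'a::comm_ring_1 vec3 \<Rightarrow> 'a vec3 \<Rightarrow> bool" where
  "indep2 u w \<longleftrightarrow> (\<forall>r s. vadd (vsmul u r) (vsmul w s) = vzero \<longrightarrow> r = 0 \<and> s = 0)"

text \<open>Points: free rank-1 submodules of R^3 (those with a one-element basis);
  lines: free rank-2 submodules (those with a two-element basis).\<close>
definition PHG_points :: "'a::comm_ring_1 itself \<Rightarrow> 'a vec3 set set" where
  "PHG_points _ = {span1 v | v. indep1 v}"

definition PHG_lines :: "'a::comm_ring_1 itself \<Rightarrow> 'a vec3 set set" where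
  "PHG_lines _ = {span2 u w | u w. indep2 u w}"

definition points_on :: "'a vec3 set set \<Rightarrow> 'a vec3 set \<Rightarrow> 'a vec3 set set" where
  "points_on B L = {P \<in> B. P \<subseteq> L}"

definition blocking_set :: "'a::comm_ring_1 itself \<Rightarrow> 'a vec3 set set \<Rightarrow> nat \<Rightarrow> nat \<Rightarrow> bool" where
  "blocking_set T B k n \<longleftrightarrow> B \<subseteq> PHG_points T \<and> card B = k \<and>
     (\<forall>L \<in> PHG_lines T. card (points_on B L) \<ge> n)"

definition proj_arc :: "'a::comm_ring_1 itself \<Rightarrow> 'a vec3 set set \<Rightarrow> nat \<Rightarrow> nat \<Rightarrow> bool" where
  "proj_arc T K k n \<longleftrightarrow> K \<subseteq> PHG_points T \<and> card K = k \<and>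
     (\<forall>L \<in> PHG_lines T. card (points_on K L) \<le> n)"

end

theory Submission
  imports Defs
begin

text \<open>Let \<open>R\<close> be a chain ring of length 2, so some \<open>t \<noteq> 0\<close> annihilates every nonunit. A free
  rank-2 submodule spanned by \<open>u, w\<close> is the orthogonal of \<open>u \<times> w\<close>, and \<open>u \<times> w\<close> has a unit
  coordinate, since otherwise \<open>t\<close> would kill all its minors and then \<open>u\<close> itself. Scaling a vector
  with a unit coordinate so that its first unit coordinate becomes 1 gives a unique normal form,
  for points as well as for normals of lines. Hence \<open>PHG(2,R)\<close> is described by the normalized
  vectors of \<open>R\<^sup>3\<close>, a point \<open>x\<close> lying on the line with normal \<open>a\<close> iff \<open>x \<cdot> a = 0\<close>, and the
  blocking sets and their complementary arcs are verified by counting incidences with all lines.\<close>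

definition dot3 :: "'a::comm_ring_1 vec3 \<Rightarrow> 'a vec3 \<Rightarrow> 'a" where
  "dot3 x a = (case x of (x1, x2, x3) \<Rightarrow> case a of (a1, a2, a3) \<Rightarrow> x1 * a1 + x2 * a2 + x3 * a3)"

definition cross3 :: "'a::comm_ring_1 vec3 \<Rightarrow> 'a vec3 \<Rightarrow> 'a vec3" where
  "cross3 u w = (case u of (u1, u2, u3) \<Rightarrow> case w of (w1, w2, w3) \<Rightarrow>
      (u2 * w3 - u3 * w2, u3 * w1 - u1 * w3, u1 * w2 - u2 * w1))"

definition perp :: "'a::comm_ring_1 vec3 \<Rightarrow> 'a vec3 set" where
  "perp a = {x. dot3 x a = 0}"

definition unimodular :: "'a::comm_ring_1 vec3 \<Rightarrow> bool" where
  "unimodular v \<longleftrightarrow> (case v of (v1, v2, v3) \<Rightarrow> v1 dvd 1 \<or> v2 dvd 1 \<or> v3 dvd 1)"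

definition normalized :: "'a::comm_ring_1 vec3 \<Rightarrow> bool" where
  "normalized v \<longleftrightarrow> (case v of (v1, v2, v3) \<Rightarrow>
     v1 = 1 \<or> (\<not> v1 dvd 1 \<and> v2 = 1) \<or> (\<not> v1 dvd 1 \<and> \<not> v2 dvd 1 \<and> v3 = 1))"

definition normal_list :: "'a::comm_ring_1 list \<Rightarrow> 'a list \<Rightarrow> 'a vec3 list" where
  "normal_list els nons = [(1, b, c). b \<leftarrow> els, c \<leftarrow> els] @ [(n, 1, c). n \<leftarrow> nons, c \<leftarrow> els]
     @ [(n, m, 1). n \<leftarrow> nons, m \<leftarrow> nons]"

lemma unit_mult_eq_0_iff:
  fixes a b :: "'a::comm_ring_1"
  assumes "a dvd 1" shows "a * b = 0 \<longleftrightarrow> b = 0"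
proof
  assume ab: "a * b = 0"
  obtain e where "1 = a * e" using assms by (rule dvdE)
  then have "b = e * (a * b)" by (metis mult.assoc mult.commute mult_1)
  with ab show "b = 0" by simp
qed simp

lemma unit_factor_dvd_one: "(x::'a::comm_ring_1) * r = 1 \<Longrightarrow> r dvd 1"
  by (metis dvd_triv_right)

lemma dot3_vsmul_left: "dot3 (vsmul v r) a = dot3 v a * r"
  by (auto simp: dot3_def vsmul_def algebra_simps split: prod.splits)

lemma dot3_vsmul_right: "dot3 x (vsmul a c) = dot3 x a * c"
  by (auto simp: dot3_def vsmul_def algebra_simps split: prod.splits)

lemma perp_vsmul_unit: "c dvd 1 \<Longrightarrow> perp (vsmul a c) = perp a"
  by (simp add: perp_def dot3_vsmul_right mult.commute[of _ c] unit_mult_eq_0_iff)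

lemma span2_subset_perp_cross3: "span2 u w \<subseteq> perp (cross3 u w)"
proof
  fix x assume "x \<in> span2 u w"
  then obtain r s where x: "x = vadd (vsmul u r) (vsmul w s)" unfolding span2_def by auto
  obtain u1 u2 u3 w1 w2 w3 where "u = (u1, u2, u3)" "w = (w1, w2, w3)" by (cases u, cases w) auto
  moreover have "(u1*r + w1*s) * (u2*w3 - u3*w2) + (u2*r + w2*s) * (u3*w1 - u1*w3)
      + (u3*r + w3*s) * (u1*w2 - u2*w1) = 0"
    by (simp add: algebra_simps)
  ultimately show "x \<in> perp (cross3 u w)"
    by (simp add: x perp_def dot3_def cross3_def vadd_def vsmul_def)
qed

text \<open>Cramer's rule for the first two equations; the third is then the vanishing of the
  determinant.\<close>
lemma cramer_unit_minor:
  fixes x1 :: "'a::comm_ring_1"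
  assumes det: "x1*(u2*w3 - u3*w2) + x2*(u3*w1 - u1*w3) + x3*(u1*w2 - u2*w1) = 0"
    and e: "(u1*w2 - u2*w1) * e = 1"
  shows "\<exists>r s. x1 = u1*r + w1*s \<and> x2 = u2*r + w2*s \<and> x3 = u3*r + w3*s"
proof (intro exI conjI)
  let ?r = "(x1*w2 - x2*w1) * e" and ?s = "(u1*x2 - u2*x1) * e"
  have "u1*?r + w1*?s = x1 * ((u1*w2 - u2*w1) * e)"
    by (simp add: algebra_simps)
  then show "x1 = u1*?r + w1*?s" using e by simp
  have "u2*?r + w2*?s = x2 * ((u1*w2 - u2*w1) * e)"
    by (simp add: algebra_simps)
  then show "x2 = u2*?r + w2*?s" using e by simp
  have "u3*?r + w3*?s = x3 * ((u1*w2 - u2*w1) * e)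
      - e * (x1*(u2*w3 - u3*w2) + x2*(u3*w1 - u1*w3) + x3*(u1*w2 - u2*w1))"
    by (simp add: algebra_simps)
  then show "x3 = u3*?r + w3*?s" using e det by simp
qed

lemma perp_cross3_subset_span2:
  assumes "unimodular (cross3 u w)" shows "perp (cross3 u w) \<subseteq> span2 u w"
proof
  fix x assume "x \<in> perp (cross3 u w)"
  obtain u1 u2 u3 w1 w2 w3 where u: "u = (u1, u2, u3)" and w: "w = (w1, w2, w3)"
    by (cases u, cases w) auto
  obtain x1 x2 x3 where x: "x = (x1, x2, x3)" by (cases x)
  have det: "x1*(u2*w3 - u3*w2) + x2*(u3*w1 - u1*w3) + x3*(u1*w2 - u2*w1) = 0"
    using \<open>x \<in> perp (cross3 u w)\<close> by (simp add: u w x perp_def dot3_def cross3_def)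
  have "\<exists>r s. x1 = u1*r + w1*s \<and> x2 = u2*r + w2*s \<and> x3 = u3*r + w3*s"
  proof -
    consider "(u2*w3 - u3*w2) dvd 1" | "(u3*w1 - u1*w3) dvd 1" | "(u1*w2 - u2*w1) dvd 1"
      using assms by (auto simp: u w unimodular_def cross3_def)
    then show ?thesis
    proof cases  \<comment> \<open>cases 1 and 2 are cyclic rotations of case 3\<close>
      case 1
      then obtain e where "(u2*w3 - u3*w2) * e = 1" by (metis dvdE)
      moreover have "x2*(u3*w1 - u1*w3) + x3*(u1*w2 - u2*w1) + x1*(u2*w3 - u3*w2) = 0"
        using det by (simp add: algebra_simps)
      ultimately show ?thesis using cramer_unit_minor[of x2 u3 w1 u1 w3 x3 w2 u2 x1 e] by blast
    next
      case 2
      then obtain e where "(u3*w1 - u1*w3) * e = 1" by (metis dvdE)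
      moreover have "x3*(u1*w2 - u2*w1) + x1*(u2*w3 - u3*w2) + x2*(u3*w1 - u1*w3) = 0"
        using det by (simp add: algebra_simps)
      ultimately show ?thesis using cramer_unit_minor[of x3 u1 w2 u2 w1 x1 w3 u3 x2 e] by blast
    next
      case 3
      then obtain e where "(u1*w2 - u2*w1) * e = 1" by (metis dvdE)
      with det show ?thesis using cramer_unit_minor by blast
    qed
  qed
  then show "x \<in> span2 u w"
    by (auto simp: span2_def x u w vadd_def vsmul_def)
qed

lemma span1_self: "v \<in> span1 v"
  unfolding span1_def by (rule CollectI, rule exI[of _ 1]) (simp add: vsmul_def split: prod.splits)

lemma span1_subset_perp_iff: "span1 v \<subseteq> perp a \<longleftrightarrow> dot3 v a = 0"
  using span1_self[of v] by (auto simp: span1_def perp_def dot3_vsmul_left)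

lemma unimodular_normalize:
  assumes "unimodular a" shows "\<exists>c. c dvd 1 \<and> normalized (vsmul a c)"
proof -
  obtain a1 a2 a3 where a: "a = (a1, a2, a3)" by (cases a)
  have nonunit_mult: "\<not> (x * c) dvd 1" if "\<not> x dvd 1" for x c :: 'a
    using that dvd_mult_left by blast
  consider "a1 dvd 1" | "\<not> a1 dvd 1" "a2 dvd 1" | "\<not> a1 dvd 1" "\<not> a2 dvd 1" "a3 dvd 1"
    using assms by (auto simp: a unimodular_def)
  then show ?thesis
  proof cases
    case 1
    then obtain c where "a1 * c = 1" by (metis dvdE)
    then show ?thesis
      by (intro exI[of _ c]) (auto simp: a vsmul_def normalized_def intro: unit_factor_dvd_one)
  next
    case 2
    then obtain c where "a2 * c = 1" by (metis dvdE)
    then show ?thesis using 2 nonunit_mult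
      by (intro exI[of _ c]) (auto simp: a vsmul_def normalized_def intro: unit_factor_dvd_one)
  next
    case 3
    then obtain c where "a3 * c = 1" by (metis dvdE)
    then show ?thesis using 3 nonunit_mult
      by (intro exI[of _ c]) (auto simp: a vsmul_def normalized_def intro: unit_factor_dvd_one)
  qed
qed

lemma normalized_imp_indep1: "normalized v \<Longrightarrow> indep1 v"
  by (auto simp: normalized_def indep1_def vsmul_def vzero_def split: prod.splits)

lemma normalized_vsmul_imp_eq_1:
  assumes "normalized v" "normalized (vsmul v r)" shows "r = 1"
proof -
  obtain v1 v2 v3 where v: "v = (v1, v2, v3)" by (cases v)
  have unit: "x dvd 1" "r dvd 1" if "x * r = 1" for x :: 'a
    using that unit_factor_dvd_one[of x r] by (auto intro: dvdI[of _ _ r])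
  from assms show ?thesis
    by (auto simp: v vsmul_def normalized_def dest: unit)
qed

lemma inj_on_span1_normalized: "inj_on span1 {v. normalized v}"
proof (rule inj_onI)
  fix v w assume "v \<in> {v. normalized v}" "w \<in> {v. normalized v}" and "span1 v = span1 w"
  moreover obtain r where "w = vsmul v r"
    using span1_self[of w] \<open>span1 v = span1 w\<close> unfolding span1_def by auto
  ultimately have "r = 1" using normalized_vsmul_imp_eq_1[of v r] by auto
  with \<open>w = vsmul v r\<close> show "v = w" by (simp add: vsmul_def split: prod.splits)
qed

lemma set_normal_list:
  assumes "set els = UNIV" and "set nons = {x. \<not> x dvd 1}"
  shows "set (normal_list els nons) = {v. normalized v}"
proof
  show "set (normal_list els nons) \<subseteq> {v. normalized v}"
    using assms(2) by (auto simp: normal_list_def normalized_def)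
  show "{v. normalized v} \<subseteq> set (normal_list els nons)"
    using assms by (force simp: normal_list_def normalized_def image_iff)
qed

lemma list_all_normal_list_imp:
  assumes "set els = UNIV" and "set nons = {x. \<not> x dvd 1}"
    and "list_all P (normal_list els nons)" and "normalized a"
  shows "P a"
  using assms(3,4) unfolding list_all_iff set_normal_list[OF assms(1,2)] by blast

lemma card_points_on_perp:
  assumes "list_all normalized B" and "distinct B"
  shows "card (points_on (span1 ` set B) (perp a)) = length (filter (\<lambda>v. dot3 v a = 0) B)"
proof -
  let ?F = "filter (\<lambda>v. dot3 v a = 0) B"
  have "points_on (span1 ` set B) (perp a) = span1 ` {v \<in> set B. span1 v \<subseteq> perp a}"
    by (auto simp: points_on_def)
  also have "\<dots> = span1 ` set ?F"
    by (simp add: span1_subset_perp_iff)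
  finally have "points_on (span1 ` set B) (perp a) = span1 ` set ?F" .
  moreover have "inj_on span1 (set ?F)"
    using inj_on_span1_normalized by (rule inj_on_subset) (use assms(1) in \<open>auto simp: list_all_iff\<close>)
  ultimately show ?thesis
    using distinct_card[of ?F] assms(2) by (simp add: card_image)
qed

lemma card_span1_image:
  assumes "list_all normalized B" and "distinct B" shows "card (span1 ` set B) = length B"
proof -
  have "inj_on span1 (set B)"
    using assms(1) by (intro inj_on_subset[OF inj_on_span1_normalized]) (auto simp: list_all_iff)
  with assms(2) show ?thesis by (simp add: card_image distinct_card)
qed

text \<open>A finite chain ring of length 2 has maximal ideal \<open>tR\<close> with \<open>t\<^sup>2 = 0\<close>; all the argument
  needs is that some \<open>t \<noteq> 0\<close> annihilates every nonunit.\<close>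
locale chain_ring_length_two =
  fixes t :: "'a::comm_ring_1"
  assumes t_nonzero: "t \<noteq> 0"
    and nonunit_mult_t: "\<not> x dvd 1 \<Longrightarrow> x * t = 0"
begin

text \<open>If no 2-minor of \<open>u, w\<close> is a unit, all minors are killed by \<open>t\<close>, so \<open>u\<^sub>j t \<cdot> w - w\<^sub>j t \<cdot> u = 0\<close>
  forces \<open>u\<^sub>j t = 0\<close> for every \<open>j\<close>, i.e. \<open>u \<cdot> t = 0\<close>.\<close>
lemma indep2_imp_unimodular_cross3:
  fixes u w :: "'a vec3"
  assumes "indep2 u w" shows "unimodular (cross3 u w)"
proof (rule ccontr)
  assume "\<not> unimodular (cross3 u w)"
  obtain u1 u2 u3 w1 w2 w3 where u: "u = (u1, u2, u3)" and w: "w = (w1, w2, w3)"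
    by (cases u, cases w) auto
  have "\<not> (u2*w3 - u3*w2) dvd 1" "\<not> (u3*w1 - u1*w3) dvd 1" "\<not> (u1*w2 - u2*w1) dvd 1"
    using \<open>\<not> unimodular (cross3 u w)\<close> by (simp_all add: u w unimodular_def cross3_def)
  then have minors: "(u2*w3 - u3*w2) * t = 0" "(u3*w1 - u1*w3) * t = 0" "(u1*w2 - u2*w1) * t = 0"
    by (simp_all add: nonunit_mult_t)
  have indep: "r = 0 \<and> s = 0"
    if "u1*r + w1*s = 0" "u2*r + w2*s = 0" "u3*r + w3*s = 0" for r s
  proof -
    have "vadd (vsmul u r) (vsmul w s) = vzero"
      using that by (simp add: u w vadd_def vsmul_def vzero_def)
    then show ?thesis using assms unfolding indep2_def by blast
  qed
  have "u1 * t = 0"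
  proof -
    have "u1 * - (w1*t) + w1 * (u1*t) = 0"
      by (simp add: algebra_simps)
    moreover have "u2 * - (w1*t) + w2 * (u1*t) = 0"
      using minors(3) by (simp add: algebra_simps)
    moreover have "u3 * - (w1*t) + w3 * (u1*t) = 0"
      using minors(2) by (simp add: algebra_simps)
    ultimately show ?thesis using indep[of "- (w1*t)" "u1*t"] by blast
  qed
  moreover have "u2 * t = 0"
  proof -
    have "u1 * - (w2*t) + w1 * (u2*t) = 0"
      using minors(3) by (simp add: algebra_simps)
    moreover have "u2 * - (w2*t) + w2 * (u2*t) = 0"
      by (simp add: algebra_simps)
    moreover have "u3 * - (w2*t) + w3 * (u2*t) = 0"
      using minors(1) by (simp add: algebra_simps)
    ultimately show ?thesis using indep[of "- (w2*t)" "u2*t"] by blast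
  qed
  moreover have "u3 * t = 0"
  proof -
    have "u1 * - (w3*t) + w1 * (u3*t) = 0"
      using minors(2) by (simp add: algebra_simps)
    moreover have "u2 * - (w3*t) + w2 * (u3*t) = 0"
      using minors(1) by (simp add: algebra_simps)
    moreover have "u3 * - (w3*t) + w3 * (u3*t) = 0"
      by (simp add: algebra_simps)
    ultimately show ?thesis using indep[of "- (w3*t)" "u3*t"] by blast
  qed
  ultimately show False
    using indep[of t 0] t_nonzero by simp
qed

lemma line_eq_perp_normalized:
  assumes "L \<in> PHG_lines TYPE('a)" shows "\<exists>a. normalized a \<and> L = perp a"
proof -
  obtain u w where L: "L = span2 u w" and "indep2 u w"
    using assms unfolding PHG_lines_def by auto
  have unimod: "unimodular (cross3 u w)"
    using \<open>indep2 u w\<close> by (rule indep2_imp_unimodular_cross3)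
  then have "L = perp (cross3 u w)"
    using L span2_subset_perp_cross3 perp_cross3_subset_span2 by blast
  moreover obtain c where "c dvd 1" and "normalized (vsmul (cross3 u w) c)"
    using unimodular_normalize[OF unimod] by blast
  moreover have "perp (vsmul (cross3 u w) c) = perp (cross3 u w)"
    using \<open>c dvd 1\<close> by (rule perp_vsmul_unit)
  ultimately show ?thesis by metis
qed

lemma blocking_set_of_list:
  assumes "list_all normalized B" and "distinct B"
    and "\<And>a. normalized a \<Longrightarrow> k \<le> length (filter (\<lambda>v. dot3 v a = 0) B)"
  shows "blocking_set TYPE('a) (span1 ` set B) (length B) k"
  unfolding blocking_set_def
proof (intro conjI ballI)
  show "span1 ` set B \<subseteq> PHG_points TYPE('a)"
    using assms(1) normalized_imp_indep1 by (fastforce simp: list_all_iff PHG_points_def)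
  show "card (span1 ` set B) = length B"
    using assms(1,2) by (rule card_span1_image)
  fix L assume "L \<in> PHG_lines TYPE('a)"
  then obtain a where "normalized a" and "L = perp a" by (blast dest: line_eq_perp_normalized)
  then show "k \<le> card (points_on (span1 ` set B) L)"
    using assms(3) card_points_on_perp[OF assms(1,2)] by simp
qed

lemma proj_arc_of_list:
  assumes "list_all normalized K" and "distinct K"
    and "\<And>a. normalized a \<Longrightarrow> length (filter (\<lambda>v. dot3 v a = 0) K) \<le> n"
  shows "proj_arc TYPE('a) (span1 ` set K) (length K) n"
  unfolding proj_arc_def
proof (intro conjI ballI)
  show "span1 ` set K \<subseteq> PHG_points TYPE('a)"
    using assms(1) normalized_imp_indep1 by (fastforce simp: list_all_iff PHG_points_def)
  show "card (span1 ` set K) = length K"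
    using assms(1,2) by (rule card_span1_image)
  fix L assume "L \<in> PHG_lines TYPE('a)"
  then obtain a where "normalized a" and "L = perp a" by (blast dest: line_eq_perp_normalized)
  then show "card (points_on (span1 ` set K) L) \<le> n"
    using assms(3) card_points_on_perp[OF assms(1,2)] by simp
qed

end

lemma UNIV_Z9: "(UNIV :: Z9 set) = {0, 1, 2, 3, 4, 5, 6, 7, 8}"
proof -
  have "x \<in> {0, 1, 2, 3, 4, 5, 6, 7, 8}" for x :: Z9
  proof (cases x)
    case (of_int z)
    then have "z \<in> {0, 1, 2, 3, 4, 5, 6, 7, 8}" by auto
    with of_int show ?thesis by auto
  qed
  then show ?thesis by blast
qed

lemma Z9_dvd_one_iff: "(x :: Z9) dvd 1 \<longleftrightarrow> x \<notin> {0, 3, 6}"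
proof
  assume "x dvd 1"
  then obtain k where "1 = x * k" by (rule dvdE)
  moreover have "x \<in> UNIV" "k \<in> UNIV" by simp_all
  ultimately show "x \<notin> {0, 3, 6}" unfolding UNIV_Z9 by auto
next
  assume "x \<notin> {0, 3, 6}"
  then have "x * (x * x * x * x * x) = 1"  \<comment> \<open>the unit group of \<open>Z9\<close> has order 6\<close>
    using UNIV_Z9 by auto
  then show "x dvd 1" by (rule dvdI[OF sym])
qed

interpretation Z9: chain_ring_length_two "3 :: Z9"
proof
  show "(3 :: Z9) \<noteq> 0" by simp
  show "x * 3 = 0" if "\<not> x dvd 1" for x :: Z9
    using that by (auto simp: Z9_dvd_one_iff)
qed

definition els9 :: "Z9 list" where "els9 = [0, 1, 2, 3, 4, 5, 6, 7, 8]"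
definition nons9 :: "Z9 list" where "nons9 = [0, 3, 6]"

lemma set_els9: "set els9 = UNIV"
  by (simp add: els9_def UNIV_Z9)

lemma set_nons9: "set nons9 = {x. \<not> x dvd 1}"
  by (auto simp: nons9_def Z9_dvd_one_iff)

definition blocking_Z9 :: "Z9 vec3 list" where
  "blocking_Z9 = [(1, 0, 1), (1, 0, 2), (1, 0, 5), (1, 0, 6), (1, 0, 7), (1, 1, 2), (1, 1, 4), (1, 1, 7), (1, 1, 8), (1, 2, 0), (1, 2, 5), (1, 2, 6), (1, 2, 7), (1, 3, 1), (1, 3, 2), (1, 3, 6), (1, 3, 7), (1, 3, 8), (1, 4, 2), (1, 4, 4), (1, 4, 7), (1, 4, 8), (1, 5, 3), (1, 5, 5), (1, 5, 6), (1, 5, 7), (1, 6, 1), (1, 6, 5), (1, 6, 6), (1, 6, 7), (1, 6, 8), (1, 7, 0), (1, 7, 2), (1, 7, 3), (1, 7, 4), (1, 7, 6), (1, 7, 7), (1, 7, 8), (1, 8, 0), (1, 8, 3), (1, 8, 5), (1, 8, 7), (0, 1, 1), (0, 1, 2), (0, 1, 3), (0, 1, 6), (3, 1, 0), (3, 1, 3), (3, 1, 4), (3, 1, 8), (6, 1, 0), (6, 1, 5), (6, 1, 6), (6, 1, 7), (0, 3, 1), (3, 3, 1), (6, 3, 1)]"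

definition arc_Z9 :: "Z9 vec3 list" where
  "arc_Z9 = [v \<leftarrow> normal_list els9 nons9. v \<notin> set blocking_Z9]"

lemma blocking_Z9_counts:
  "list_all (\<lambda>a. 5 \<le> length (filter (\<lambda>v. dot3 v a = 0) blocking_Z9)) (normal_list els9 nons9)"
  by (simp add: blocking_Z9_def normal_list_def els9_def nons9_def dot3_def)

lemma arc_Z9_counts:
  "list_all (\<lambda>a. length (filter (\<lambda>v. dot3 v a = 0) arc_Z9) \<le> 7) (normal_list els9 nons9)"
  by (simp add: arc_Z9_def blocking_Z9_def normal_list_def els9_def nons9_def dot3_def)

lemma blocking_set_Z9: "blocking_set TYPE(Z9) (span1 ` set blocking_Z9) 57 5"
proof -
  have "list_all normalized blocking_Z9" "distinct blocking_Z9" "length blocking_Z9 = 57"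
    by (simp_all add: blocking_Z9_def normalized_def Z9_dvd_one_iff)
  then show ?thesis
    using Z9.blocking_set_of_list list_all_normal_list_imp[OF set_els9 set_nons9 blocking_Z9_counts]
    by metis
qed

lemma proj_arc_Z9: "proj_arc TYPE(Z9) (span1 ` set arc_Z9) 60 7"
proof -
  have "list_all normalized arc_Z9"
    by (auto simp: arc_Z9_def list_all_iff set_normal_list[OF set_els9 set_nons9])
  moreover have "distinct arc_Z9" "length arc_Z9 = 60"
    by (simp_all add: arc_Z9_def blocking_Z9_def normal_list_def els9_def nons9_def)
  ultimately show ?thesis
    using Z9.proj_arc_of_list list_all_normal_list_imp[OF set_els9 set_nons9 arc_Z9_counts]
    by metis
qed

lemma UNIV_3: "(UNIV :: 3 set) = {0, 1, 2}"
proof -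
  have "x \<in> {0, 1, 2}" for x :: 3
  proof (cases x)
    case (of_int z)
    then have "z \<in> {0, 1, 2}" by auto
    with of_int show ?thesis by auto
  qed
  then show ?thesis by blast
qed

lemma S3_dvd_one_iff: "(x :: S3) dvd 1 \<longleftrightarrow> re x \<noteq> 0"
proof
  assume "x dvd 1"
  then obtain k where "1 = x * k" by (rule dvdE)
  then have "1 = re x * re k" by (simp add: times_dual_def one_dual_def)
  then show "re x \<noteq> 0" by auto
next
  assume "re x \<noteq> 0"
  then have "re x * re x = 1" using UNIV_3 by auto
  then have "x * Dual (re x) (- ep x) = 1" by (simp add: times_dual_def one_dual_def algebra_simps)
  then show "x dvd 1" by (rule dvdI[OF sym])
qed

lemma Dual_dvd_Dual_one_iff: "(Dual a b :: S3) dvd Dual 1 0 \<longleftrightarrow> a \<noteq> 0"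
  using S3_dvd_one_iff[of "Dual a b"] by (simp add: one_dual_def)

interpretation S3: chain_ring_length_two "Dual 0 1 :: S3"
proof
  show "(Dual 0 1 :: S3) \<noteq> 0" by (simp add: zero_dual_def)
  show "x * Dual 0 1 = 0" if "\<not> x dvd 1" for x :: S3
    using that by (simp add: S3_dvd_one_iff times_dual_def zero_dual_def)
qed

definition els3 :: "S3 list" where "els3 = [Dual a b. a \<leftarrow> [0, 1, 2], b \<leftarrow> [0, 1, 2]]"
definition nons3 :: "S3 list" where "nons3 = [Dual 0 0, Dual 0 1, Dual 0 2]"

lemma set_els3: "set els3 = UNIV"
proof -
  have "Dual a b \<in> set els3" for a b using UNIV_3 by (auto simp: els3_def)
  then show ?thesis by (metis UNIV_eq_I dual.exhaust)
qed

lemma set_nons3: "set nons3 = {x. \<not> x dvd 1}"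
proof -
  have "x \<in> set nons3" if "re x = 0" for x :: S3
  proof -
    have "ep x \<in> {0, 1, 2}" using UNIV_3 by auto
    with that show ?thesis by (cases x) (auto simp: nons3_def)
  qed
  then show ?thesis by (auto simp: nons3_def S3_dvd_one_iff)
qed

lemmas S3_arith = times_dual_def plus_dual_def zero_dual_def one_dual_def Dual_dvd_Dual_one_iff

definition blocking_S3 :: "S3 vec3 list" where
  "blocking_S3 = [(Dual 1 0, Dual 0 0, Dual 0 2), (Dual 1 0, Dual 0 0, Dual 1 0), (Dual 1 0, Dual 0 0, Dual 2 0), (Dual 1 0, Dual 0 0, Dual 2 1), (Dual 1 0, Dual 0 1, Dual 0 1), (Dual 1 0, Dual 0 1, Dual 1 1), (Dual 1 0, Dual 0 1, Dual 2 0), (Dual 1 0, Dual 0 1, Dual 2 2), (Dual 1 0, Dual 0 2, Dual 0 0), (Dual 1 0, Dual 0 2, Dual 1 2), (Dual 1 0, Dual 0 2, Dual 2 1), (Dual 1 0, Dual 0 2, Dual 2 2), (Dual 1 0, Dual 1 0, Dual 0 2), (Dual 1 0, Dual 1 0, Dual 1 2), (Dual 1 0, Dual 1 0, Dual 2 0), (Dual 1 0, Dual 1 0, Dual 2 2), (Dual 1 0, Dual 1 1, Dual 0 0), (Dual 1 0, Dual 1 1, Dual 1 1), (Dual 1 0, Dual 1 1, Dual 2 1), (Dual 1 0, Dual 1 1, Dual 2 2), (Dual 1 0, Dual 1 2, Dual 0 1), (Dual 1 0, Dual 1 2, Dual 1 0), (Dual 1 0, Dual 1 2, Dual 2 0),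 (Dual 1 0, Dual 1 2, Dual 2 1), (Dual 1 0, Dual 2 0, Dual 0 0), (Dual 1 0, Dual 2 0, Dual 0 2), (Dual 1 0, Dual 2 0, Dual 1 1), (Dual 1 0, Dual 2 0, Dual 1 2), (Dual 1 0, Dual 2 1, Dual 0 0), (Dual 1 0, Dual 2 1, Dual 0 1), (Dual 1 0, Dual 2 1, Dual 1 0), (Dual 1 0, Dual 2 1, Dual 1 1), (Dual 1 0, Dual 2 1, Dual 2 0), (Dual 1 0, Dual 2 1, Dual 2 1), (Dual 1 0, Dual 2 1, Dual 2 2), (Dual 1 0, Dual 2 2, Dual 0 1), (Dual 1 0, Dual 2 2, Dual 0 2), (Dual 1 0, Dual 2 2, Dual 1 0), (Dual 1 0, Dual 2 2, Dual 1 2), (Dual 0 0, Dual 1 0, Dual 0 0), (Dual 0 0, Dual 1 0, Dual 1 0), (Dual 0 0, Dual 1 0, Dual 1 1), (Dual 0 0, Dual 1 0, Dual 2 1), (Dual 0 0, Dual 1 0, Dual 2 2), (Dual 0 1, Dual 1 0, Dual 0 2), (Dual 0 1, Dual 1 0, Dual 1 1), (Dual 0 1, Dual 1 0, Dual 1 2), (Dual 0 1, Dual 1 0, Dual 2 0), (Dual 0 1, Dual 1 0, Dual 2 1), (Dual 0 2, Dual 1 0, Dual 0 1), (Dual 0 2, Dual 1 0, Dual 1 0), (Dual 0 2, Dual 1 0, Dual 1 2), (Dual 0 2, Dual 1 0, Dual 2 0), (Dual 0 2, Dual 1 0, Dual 2 2), (Dual 0 1, Dual 0 0, Dual 1 0),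 (Dual 0 1, Dual 0 1, Dual 1 0), (Dual 0 1, Dual 0 2, Dual 1 0)]"

definition arc_S3 :: "S3 vec3 list" where
  "arc_S3 = [v \<leftarrow> normal_list els3 nons3. v \<notin> set blocking_S3]"

lemma blocking_S3_counts:
  "list_all (\<lambda>a. 5 \<le> length (filter (\<lambda>v. dot3 v a = 0) blocking_S3)) (normal_list els3 nons3)"
  by (simp add: blocking_S3_def normal_list_def els3_def nons3_def dot3_def S3_arith)

lemma arc_S3_counts:
  "list_all (\<lambda>a. length (filter (\<lambda>v. dot3 v a = 0) arc_S3) \<le> 7) (normal_list els3 nons3)"
  by (simp add: arc_S3_def blocking_S3_def normal_list_def els3_def nons3_def dot3_def S3_arith)

lemma blocking_set_S3: "blocking_set TYPE(S3) (span1 ` set blocking_S3) 57 5"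
proof -
  have "list_all normalized blocking_S3" "distinct blocking_S3" "length blocking_S3 = 57"
    by (simp_all add: blocking_S3_def normalized_def S3_arith)
  then show ?thesis
    using S3.blocking_set_of_list list_all_normal_list_imp[OF set_els3 set_nons3 blocking_S3_counts]
    by metis
qed

lemma proj_arc_S3: "proj_arc TYPE(S3) (span1 ` set arc_S3) 60 7"
proof -
  have "list_all normalized arc_S3"
    by (auto simp: arc_S3_def list_all_iff set_normal_list[OF set_els3 set_nons3])
  moreover have "distinct arc_S3" "length arc_S3 = 60"
    by (simp_all add: arc_S3_def blocking_S3_def normal_list_def els3_def nons3_def S3_arith)
  ultimately show ?thesis
    using S3.proj_arc_of_list list_all_normal_list_imp[OF set_els3 set_nons3 arc_S3_counts]
    by metis
qed

theorem theorem3p5: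
  shows "(\<exists>B. blocking_set TYPE(Z9) B 57 5) \<and> (\<exists>K. proj_arc TYPE(Z9) K 60 7)
       \<and> (\<exists>B. blocking_set TYPE(S3) B 57 5) \<and> (\<exists>K. proj_arc TYPE(S3) K 60 7)"
  using blocking_set_Z9 proj_arc_Z9 blocking_set_S3 proj_arc_S3 by blast

end
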